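(* Let $A>0$, $b>0$ and $\rho\in(\frac14,\frac12)$. Then, as $h\to0_+$, \[ \inf_{\substack{m\in\mathbb Z\\|m|\le A}}\lambda_1\bigl(\mathcal H^{b,\rho}_{m,h}\bigr)=-1-h^{1/2}+\Bigl(\hat\beta(b,A)-\frac12\Bigr)h+o(h), \qquad\hat\beta(b,A)=\inf_{\substack{m\in\mathbb Z\\|m|\le A}}\Bigl(m-\frac b2\Bigr)^2. \]
   Context: Let $h\in(0,1)$ with $h^{\frac12-\rho}<\frac13$ and $\delta=h^{\rho-\frac12}$. For $m\in\mathbb Z$, $\mathcal H^{b,\rho}_{m,h}$ is the self-adjoint operator in the weighted space $L^2((0,\delta);(1-h^{1/2}\tau)d\tau)$ associated with the quadratic form \[ v\mapsto\int_0^\delta\Bigl(|v'(\tau)|^2+\frac{h}{(1-h^{1/2}\tau)^2}\Bigl(m-\frac b2(1-h^{1/2}\tau)^2\Bigr)^2|v(\tau)|^2\Bigr)(1-h^{1/2}\tau)\,d\tau-|v(0)|^2 \] on $\{v\in H^1((0,\delta)):v(\delta)=0\}$ (boundary conditions $v'(0)=-v(0)$, $v(\delta)=0$). $\lambda_1(\cdot)$ denotes the lowest eigenvalue. *)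

theory Defs
  imports "HOL-Analysis.Analysis" "HOL-Library.Landau_Symbols"
begin

text \<open>Form domain: v in H^1((0,delta)) with v(delta) = 0.  On an interval, H^1 consists
  exactly of the functions v(x) = v(0) + integral_0^x g with g in L^2 (absolutely
  continuous with square-integrable weak derivative g = v').\<close>
definition H1_dir :: "real \<Rightarrow> (real \<Rightarrow> real) \<Rightarrow> (real \<Rightarrow> real) \<Rightarrow> bool" where
  "H1_dir \<delta> v g \<longleftrightarrow>
     set_integrable lborel {0..\<delta>} g \<and>
     set_integrable lborel {0..\<delta>} (\<lambda>t. (g t)\<^sup>2) \<and>
     (\<forall>x\<in>{0..\<delta>}. v x = v 0 + (LBINT t=0..x. g t)) \<and>
     v \<delta> = 0"

definition qform :: "real \<Rightarrow> real \<Rightarrow> int \<Rightarrow> real \<Rightarrow> (real \<Rightarrow> real) \<Rightarrow> (real \<Rightarrow> real) \<Rightarrow> real" where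
  "qform h b m \<delta> v g =
     (LBINT \<tau>=0..\<delta>. ((g \<tau>)\<^sup>2 + h / (1 - sqrt h * \<tau>)\<^sup>2
        * (real_of_int m - b / 2 * (1 - sqrt h * \<tau>)\<^sup>2)\<^sup>2 * (v \<tau>)\<^sup>2) * (1 - sqrt h * \<tau>))
     - (v 0)\<^sup>2"

definition wnorm2 :: "real \<Rightarrow> real \<Rightarrow> (real \<Rightarrow> real) \<Rightarrow> real" where
  "wnorm2 h \<delta> v = (LBINT \<tau>=0..\<delta>. (v \<tau>)\<^sup>2 * (1 - sqrt h * \<tau>))"

text \<open>Lowest eigenvalue of H^{b,rho}_{m,h}, via the min-max principle (bottom of the
  spectrum = infimum of the Rayleigh quotient over the form domain), delta = h^(rho-1/2).\<close>
definition lambda1 :: "real \<Rightarrow> real \<Rightarrow> real \<Rightarrow> int \<Rightarrow> real" where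
  "lambda1 b \<rho> h m =
     (let \<delta> = h powr (\<rho> - 1/2) in
      Inf {qform h b m \<delta> v g / wnorm2 h \<delta> v | v g. H1_dir \<delta> v g \<and> wnorm2 h \<delta> v \<noteq> 0})"

definition beta_hat :: "real \<Rightarrow> real \<Rightarrow> real" where
  "beta_hat b A = Inf ((\<lambda>m::int. (real_of_int m - b / 2)\<^sup>2) ` {m. \<bar>real_of_int m\<bar> \<le> A})"

end

theory Submission
  imports Defs
begin

(* For each fixed m, lambda1 (the infimum of the Rayleigh quotient) is squeezed between two
   explicit bounds that agree up to o(h); the minimum over the finitely many admissible m
   inherits the expansion.

   Lower bound: write w = 1 - h^(1/2) tau. For a multiplier G with G(0) = 1, integrating
   (G v^2)' over (0, delta) turns the Robin term -v(0)^2 into the integral of G' v^2 + 2 G v v'.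
   Adding this to the form and completing the square leaves the Riccati expression
   G' - G^2/w + V w as a pointwise lower bound. For G = w (1 - h tau/2) this expression is
   at least (-1 - h^(1/2) - h/2 + h (m - b/2)^2 - o(h)) w on (0, delta): the potential
   V = h (m/w - b w/2)^2 stays within o(h) of h (m - b/2)^2 because h^(1/2) delta = h^rho -> 0,
   and the cubic remainders are O(h^(3/2) delta^2) = o(h) because rho > 1/4.

   Upper bound: the test function exp(-tau) - exp(-delta) has Rayleigh quotient
   -1 - h^(1/2) - h/2 + h (m - b/2)^2 + o(h); the corrections caused by cutting it off at
   delta are of size exp(-delta) delta, which is o(h) since delta = h^(rho - 1/2) -> oo. *)

lemma lborel_integral_split_at_diagonal:
  fixes p q :: "real \<Rightarrow> real"
  assumes p: "integrable lborel p" and q: "integrable lborel q"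
  shows "integrable lborel (\<lambda>x. p x * (\<integral>t. (if t \<le> x then q t else 0) \<partial>lborel))"
    and "integrable lborel (\<lambda>t. q t * (\<integral>x. (if x < t then p x else 0) \<partial>lborel))"
    and "(\<integral>x. p x * (\<integral>t. (if t \<le> x then q t else 0) \<partial>lborel) \<partial>lborel)
       + (\<integral>t. q t * (\<integral>x. (if x < t then p x else 0) \<partial>lborel) \<partial>lborel)
       = (\<integral>x. p x \<partial>lborel) * (\<integral>t. q t \<partial>lborel)"
proof -
  have [measurable]: "p \<in> borel_measurable lborel" "q \<in> borel_measurable lborel"
    using p q by auto
  have pq: "integrable (lborel \<Otimes>\<^sub>M lborel) (\<lambda>(x,t). p x * q t)"
    by (rule lborel_pair.Fubini_integrable) (auto simp: abs_mult p q integrable_abs)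
  have lower: "integrable (lborel \<Otimes>\<^sub>M lborel) (\<lambda>(x,t). p x * (if t \<le> x then q t else 0))"
    by (rule Bochner_Integration.integrable_bound[OF pq]) (auto split: if_splits simp: abs_mult)
  have upper: "integrable (lborel \<Otimes>\<^sub>M lborel) (\<lambda>(x,t). q t * (if x < t then p x else 0))"
    by (rule Bochner_Integration.integrable_bound[OF pq]) (auto split: if_splits simp: abs_mult)
  show "integrable lborel (\<lambda>x. p x * (\<integral>t. (if t \<le> x then q t else 0) \<partial>lborel))"
    using lborel_pair.integrable_fst[of "\<lambda>x t. p x * (if t \<le> x then q t else 0)"] lower by simp
  show "integrable lborel (\<lambda>t. q t * (\<integral>x. (if x < t then p x else 0) \<partial>lborel))"
    using lborel_pair.integrable_snd[of "\<lambda>x t. q t * (if x < t then p x else 0)"] upper by simp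
  have "integral\<^sup>L (lborel \<Otimes>\<^sub>M lborel) (\<lambda>(x,t). p x * (if t \<le> x then q t else 0))
     + integral\<^sup>L (lborel \<Otimes>\<^sub>M lborel) (\<lambda>(x,t). q t * (if x < t then p x else 0))
     = integral\<^sup>L (lborel \<Otimes>\<^sub>M lborel) (\<lambda>(x,t). p x * q t)"
    by (subst Bochner_Integration.integral_add[OF lower upper, symmetric])
       (auto intro: Bochner_Integration.integral_cong)
  then show "(\<integral>x. p x * (\<integral>t. (if t \<le> x then q t else 0) \<partial>lborel) \<partial>lborel)
       + (\<integral>t. q t * (\<integral>x. (if x < t then p x else 0) \<partial>lborel) \<partial>lborel)
       = (\<integral>x. p x \<partial>lborel) * (\<integral>t. q t \<partial>lborel)"
    using lborel_pair.integral_fst[of "\<lambda>x t. p x * (if t \<le> x then q t else 0)"] lower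
      lborel_pair.integral_snd[of "\<lambda>x t. q t * (if x < t then p x else 0)"] upper
      lborel_pair.integral_fst[of "\<lambda>x t. p x * q t"] pq
    by simp
qed

lemma lborel_integral_truncate_eq_set_integral:
  fixes p :: "real \<Rightarrow> real"
  assumes p: "set_integrable lborel {a..b} p" and t: "t \<in> {a..b}"
  shows "(\<integral>x. (if x \<le> t then indicator {a..b} x * p x else 0) \<partial>lborel) = (LBINT x:{a..t}. p x)"
    and "(\<integral>x. (if x < t then indicator {a..b} x * p x else 0) \<partial>lborel) = (LBINT x:{a..t}. p x)"
proof -
  have [measurable]: "(\<lambda>x. indicator {a..b} x * p x) \<in> borel_measurable borel"
    using p unfolding set_integrable_def by auto
  show le: "(\<integral>x. (if x \<le> t then indicator {a..b} x * p x else 0) \<partial>lborel) = (LBINT x:{a..t}. p x)"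
    unfolding set_lebesgue_integral_def
    by (rule Bochner_Integration.integral_cong) (use t in \<open>auto simp: indicator_def\<close>)
  have "AE x in lborel. (if x < t then indicator {a..b} x * p x else 0)
      = (if x \<le> t then indicator {a..b} x * p x else 0)"
    using AE_lborel_singleton[of t] by eventually_elim auto
  then show "(\<integral>x. (if x < t then indicator {a..b} x * p x else 0) \<partial>lborel) = (LBINT x:{a..t}. p x)"
    unfolding le[symmetric] by (intro integral_cong_AE) auto
qed

(* U and W are only absolutely continuous, so the library's integration by parts (which needs
   continuous derivatives) does not apply; instead the product integral is split along the
   diagonal with Fubini. *)
lemma set_integral_by_parts_primitives:
  fixes p q U W :: "real \<Rightarrow> real"
  assumes ab: "a \<le> b"
    and p: "set_integrable lborel {a..b} p" and q: "set_integrable lborel {a..b} q"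
    and U: "\<And>x. x \<in> {a..b} \<Longrightarrow> U x = U a + (LBINT t:{a..x}. p t)"
    and W: "\<And>x. x \<in> {a..b} \<Longrightarrow> W x = W a + (LBINT t:{a..x}. q t)"
  shows "set_integrable lborel {a..b} (\<lambda>x. p x * W x + U x * q x)"
    and "(LBINT x:{a..b}. p x * W x + U x * q x) = U b * W b - U a * W a"
proof -
  define p' where "p' x = indicator {a..b} x * p x" for x
  define q' where "q' x = indicator {a..b} x * q x" for x
  have ip: "integrable lborel p'" using p unfolding p'_def set_integrable_def by simp
  have iq: "integrable lborel q'" using q unfolding q'_def set_integrable_def by simp
  note split = lborel_integral_split_at_diagonal[OF ip iq]
  have c1: "p' x * (\<integral>t. (if t \<le> x then q' t else 0) \<partial>lborel) = indicator {a..b} x * (p x * (W x - W a))" for x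
    unfolding p'_def q'_def using lborel_integral_truncate_eq_set_integral(1)[OF q, of x] W[of x]
    by (cases "x \<in> {a..b}") auto
  have c2: "q' t * (\<integral>x. (if x < t then p' x else 0) \<partial>lborel) = indicator {a..b} t * (q t * (U t - U a))" for t
    unfolding p'_def q'_def using lborel_integral_truncate_eq_set_integral(2)[OF p, of t] U[of t]
    by (cases "t \<in> {a..b}") auto
  have i1: "integrable lborel (\<lambda>x. indicator {a..b} x * (p x * (W x - W a)))"
    using split(1) c1 by simp
  have i2: "integrable lborel (\<lambda>x. indicator {a..b} x * (q x * (U x - U a)))"
    using split(2) c2 by simp
  have decompose: "indicator {a..b} x * (p x * W x + U x * q x) =
     indicator {a..b} x * (p x * (W x - W a)) + indicator {a..b} x * (q x * (U x - U a))
     + W a * p' x + U a * q' x" for x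
    by (simp add: p'_def q'_def algebra_simps)
  show "set_integrable lborel {a..b} (\<lambda>x. p x * W x + U x * q x)"
    unfolding set_integrable_def using i1 i2 ip iq by (simp add: decompose)
  have "U b - U a = (\<integral>x. p' x \<partial>lborel)" "W b - W a = (\<integral>x. q' x \<partial>lborel)"
    using U[of b] W[of b] ab unfolding p'_def q'_def set_lebesgue_integral_def by simp_all
  then have "(LBINT x:{a..b}. p x * W x + U x * q x) =
     (U b - U a) * (W b - W a) + W a * (U b - U a) + U a * (W b - W a)"
    unfolding set_lebesgue_integral_def
    by (simp only: real_scaleR_def decompose) (simp add: i1 i2 ip iq split(3)[unfolded c1 c2])
  then show "(LBINT x:{a..b}. p x * W x + U x * q x) = U b * W b - U a * W a"
    by (simp add: algebra_simps)
qed

lemma set_integrable_continuous_mult: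
  fixes f c :: "real \<Rightarrow> real"
  assumes f: "set_integrable lborel {a..b} f" and c: "continuous_on {a..b} c"
  shows "set_integrable lborel {a..b} (\<lambda>x. c x * f x)"
proof -
  obtain B where B: "\<And>x. x \<in> {a..b} \<Longrightarrow> \<bar>c x\<bar> \<le> B"
    using compact_imp_bounded[OF compact_continuous_image[OF c compact_Icc]]
    by (force simp: bounded_real)
  have "(\<lambda>x. indicator {a..b} x * c x) \<in> borel_measurable lborel"
    using borel_measurable_continuous_on_indicator[OF _ c] by simp
  moreover have "(\<lambda>x. indicator {a..b} x * f x) \<in> borel_measurable lborel"
    using f unfolding set_integrable_def by auto
  ultimately have "(\<lambda>x. (indicator {a..b} x * c x) * (indicator {a..b} x * f x)) \<in> borel_measurable lborel"
    by measurable
  moreover have "(\<lambda>x. (indicator {a..b} x * c x) * (indicator {a..b} x * f x))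
      = (\<lambda>x. indicator {a..b} x *\<^sub>R (c x * f x))"
    by (auto simp: indicator_def)
  ultimately have "set_borel_measurable lborel {a..b} (\<lambda>x. c x * f x)"
    unfolding set_borel_measurable_def by simp
  then show ?thesis
  proof (rule set_integrable_bound[rotated])
    show "set_integrable lborel {a..b} (\<lambda>x. B * f x)" using f by simp
    show "AE x in lborel. x \<in> {a..b} \<longrightarrow> norm (c x * f x) \<le> norm (B * f x)"
    proof (intro AE_I2 impI)
      fix x assume "x \<in> {a..b}"
      then have "\<bar>c x\<bar> * \<bar>f x\<bar> \<le> \<bar>B\<bar> * \<bar>f x\<bar>"
        using B by (intro mult_right_mono) (auto intro: order.trans[OF _ abs_ge_self])
      then show "norm (c x * f x) \<le> norm (B * f x)" by (simp add: abs_mult)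
    qed
  qed
qed

lemma set_integral_FTC_real:
  fixes F f :: "real \<Rightarrow> real"
  assumes "a \<le> b" "\<And>x. (F has_real_derivative f x) (at x)" "continuous_on {a..b} f"
  shows "(LBINT x:{a..b}. f x) = F b - F a"
  unfolding set_lebesgue_integral_def using assms
  by (intro integral_FTC_atLeastAtMost)
     (auto simp: has_real_derivative_iff_has_vector_derivative intro: has_vector_derivative_at_within)

lemma H1_dir_primitive:
  assumes "H1_dir \<delta> v g" "x \<in> {0..\<delta>}"
  shows "v x = v 0 + (LBINT t:{0..x}. g t)"
proof -
  have "v x = v 0 + (LBINT t=0..x. g t)" using assms unfolding H1_dir_def by blast
  then show ?thesis using interval_integral_Icc[of 0 x g] assms(2) by (simp add: zero_ereal_def)
qed

lemma H1_dir_continuous_on: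
  assumes H: "H1_dir \<delta> v g"
  shows "continuous_on {0..\<delta>} v"
proof -
  have g: "set_integrable lborel {0..\<delta>} g" using H unfolding H1_dir_def by blast
  have "continuous_on {0..\<delta>} (\<lambda>x. v 0 + integral {0..x} g)"
    using set_borel_integral_eq_integral(1)[OF g]
    by (intro continuous_intros indefinite_integral_continuous_1)
  then show ?thesis
  proof (rule continuous_on_eq)
    fix x assume x: "x \<in> {0..\<delta>}"
    have "set_integrable lborel {0..x} g" by (rule set_integrable_subset[OF g]) (use x in auto)
    then show "v 0 + integral {0..x} g = v x"
      using H1_dir_primitive[OF H x] set_borel_integral_eq_integral(2) by metis
  qed
qed

lemma H1_dir_square_primitive:
  assumes H: "H1_dir \<delta> v g" and \<delta>: "0 \<le> \<delta>"
  shows "set_integrable lborel {0..\<delta>} (\<lambda>x. 2 * v x * g x)"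
    and "\<And>x. x \<in> {0..\<delta>} \<Longrightarrow> (v x)\<^sup>2 = (v 0)\<^sup>2 + (LBINT t:{0..x}. 2 * v t * g t)"
proof -
  have g: "set_integrable lborel {0..\<delta>} g" using H unfolding H1_dir_def by blast
  have v: "\<And>x. x \<in> {0..\<delta>} \<Longrightarrow> v x = v 0 + (LBINT t:{0..x}. g t)"
    using H1_dir_primitive[OF H] .
  have product: "(\<lambda>t. g t * v t + v t * g t) = (\<lambda>t. 2 * v t * g t)" by auto
  show "set_integrable lborel {0..\<delta>} (\<lambda>x. 2 * v x * g x)"
    using set_integral_by_parts_primitives(1)[OF \<delta> g g v v] by (simp only: product)
  fix x assume x: "x \<in> {0..\<delta>}"
  have g': "set_integrable lborel {0..x} g" by (rule set_integrable_subset[OF g]) (use x in auto)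
  have v': "\<And>y. y \<in> {0..x} \<Longrightarrow> v y = v 0 + (LBINT t:{0..y}. g t)"
    using x by (intro v) auto
  have "0 \<le> x" using x by simp
  then have "(LBINT t:{0..x}. g t * v t + v t * g t) = v x * v x - v 0 * v 0"
    by (rule set_integral_by_parts_primitives(2)[OF _ g' g' v' v'])
  then show "(v x)\<^sup>2 = (v 0)\<^sup>2 + (LBINT t:{0..x}. 2 * v t * g t)"
    by (simp only: product) (simp add: power2_eq_square)
qed

definition potential :: "real \<Rightarrow> real \<Rightarrow> int \<Rightarrow> real \<Rightarrow> real" where
  "potential h b m \<tau> = h / (1 - sqrt h * \<tau>)\<^sup>2 * (real_of_int m - b / 2 * (1 - sqrt h * \<tau>)\<^sup>2)\<^sup>2"

lemma qform_eq_set_integral: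
  assumes "0 \<le> \<delta>"
  shows "qform h b m \<delta> v g
    = (LBINT \<tau>:{0..\<delta>}. ((g \<tau>)\<^sup>2 + potential h b m \<tau> * (v \<tau>)\<^sup>2) * (1 - sqrt h * \<tau>)) - (v 0)\<^sup>2"
  using assms interval_integral_Icc[of 0 \<delta>]
  unfolding qform_def potential_def by (simp add: zero_ereal_def)

lemma wnorm2_eq_set_integral:
  assumes "0 \<le> \<delta>"
  shows "wnorm2 h \<delta> v = (LBINT \<tau>:{0..\<delta>}. (v \<tau>)\<^sup>2 * (1 - sqrt h * \<tau>))"
  using assms interval_integral_Icc[of 0 \<delta>] unfolding wnorm2_def by (simp add: zero_ereal_def)

lemma wnorm2_nonneg:
  assumes "0 \<le> \<delta>" and "sqrt h * \<delta> \<le> 1"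
  shows "0 \<le> wnorm2 h \<delta> v"
  unfolding wnorm2_eq_set_integral[OF assms(1)] set_lebesgue_integral_def
proof (rule Bochner_Integration.integral_nonneg)
  fix \<tau> :: real
  have "sqrt h * \<tau> \<le> 1" if "\<tau> \<in> {0..\<delta>}"
    using that assms(2) mult_left_mono[of \<tau> \<delta> "sqrt h"] mult_nonpos_nonneg[of "sqrt h" \<tau>]
    by (cases "0 \<le> sqrt h") auto
  then show "0 \<le> indicator {0..\<delta>} \<tau> *\<^sub>R ((v \<tau>)\<^sup>2 * (1 - sqrt h * \<tau>))"
    by (cases "\<tau> \<in> {0..\<delta>}") auto
qed

lemma continuous_on_potential:
  assumes "\<And>\<tau>. \<tau> \<in> S \<Longrightarrow> 0 < 1 - sqrt h * \<tau>"
  shows "continuous_on S (potential h b m)"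
  unfolding potential_def using assms by (intro continuous_intros) force

lemma wnorm2_integrand_integrable:
  assumes "H1_dir \<delta> v g"
  shows "set_integrable lborel {0..\<delta>} (\<lambda>\<tau>. (v \<tau>)\<^sup>2 * (1 - sqrt h * \<tau>))"
  using H1_dir_continuous_on[OF assms] by (intro borel_integrable_atLeastAtMost' continuous_intros)

lemma qform_integrand_integrable:
  assumes H: "H1_dir \<delta> v g" and weight_pos: "\<And>\<tau>. \<tau> \<in> {0..\<delta>} \<Longrightarrow> 0 < 1 - sqrt h * \<tau>"
  shows "set_integrable lborel {0..\<delta>} (\<lambda>\<tau>. ((g \<tau>)\<^sup>2 + potential h b m \<tau> * (v \<tau>)\<^sup>2) * (1 - sqrt h * \<tau>))"
proof -
  have "set_integrable lborel {0..\<delta>} (\<lambda>t. (g t)\<^sup>2)" using H unfolding H1_dir_def by blast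
  then have "set_integrable lborel {0..\<delta>} (\<lambda>\<tau>. (1 - sqrt h * \<tau>) * (g \<tau>)\<^sup>2)"
    by (intro set_integrable_continuous_mult continuous_intros)
  moreover have "set_integrable lborel {0..\<delta>} (\<lambda>\<tau>. potential h b m \<tau> * (v \<tau>)\<^sup>2 * (1 - sqrt h * \<tau>))"
    using H1_dir_continuous_on[OF H] continuous_on_potential[OF weight_pos]
    by (intro borel_integrable_atLeastAtMost' continuous_intros)
  ultimately have "set_integrable lborel {0..\<delta>}
      (\<lambda>\<tau>. (1 - sqrt h * \<tau>) * (g \<tau>)\<^sup>2 + potential h b m \<tau> * (v \<tau>)\<^sup>2 * (1 - sqrt h * \<tau>))"
    by (rule set_integral_add(1))
  then show ?thesis by (rule set_integrable_cong[THEN iffD1, rotated -1]) (auto simp: algebra_simps)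
qed

lemma qform_le_of_potential_le:
  assumes H: "H1_dir \<delta> v g" and \<delta>: "0 \<le> \<delta>"
    and weight_pos: "\<And>\<tau>. \<tau> \<in> {0..\<delta>} \<Longrightarrow> 0 < 1 - sqrt h * \<tau>"
    and K: "\<And>\<tau>. \<tau> \<in> {0..\<delta>} \<Longrightarrow> potential h b m \<tau> \<le> K"
  shows "qform h b m \<delta> v g \<le> (LBINT \<tau>:{0..\<delta>}. (g \<tau>)\<^sup>2 * (1 - sqrt h * \<tau>)) + K * wnorm2 h \<delta> v - (v 0)\<^sup>2"
proof -
  have "set_integrable lborel {0..\<delta>} (\<lambda>\<tau>. (1 - sqrt h * \<tau>) * (g \<tau>)\<^sup>2)"
    using H unfolding H1_dir_def by (intro set_integrable_continuous_mult continuous_intros) auto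
  then have g2: "set_integrable lborel {0..\<delta>} (\<lambda>\<tau>. (g \<tau>)\<^sup>2 * (1 - sqrt h * \<tau>))"
    by (simp add: mult.commute)
  have "(LBINT \<tau>:{0..\<delta>}. ((g \<tau>)\<^sup>2 + potential h b m \<tau> * (v \<tau>)\<^sup>2) * (1 - sqrt h * \<tau>))
      \<le> (LBINT \<tau>:{0..\<delta>}. (g \<tau>)\<^sup>2 * (1 - sqrt h * \<tau>) + K * ((v \<tau>)\<^sup>2 * (1 - sqrt h * \<tau>)))"
  proof (rule set_integral_mono)
    show "set_integrable lborel {0..\<delta>} (\<lambda>\<tau>. (g \<tau>)\<^sup>2 * (1 - sqrt h * \<tau>) + K * ((v \<tau>)\<^sup>2 * (1 - sqrt h * \<tau>)))"
      using g2 wnorm2_integrand_integrable[OF H] by (intro set_integral_add(1)) auto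
    fix \<tau> assume \<tau>: "\<tau> \<in> {0..\<delta>}"
    have "potential h b m \<tau> * ((v \<tau>)\<^sup>2 * (1 - sqrt h * \<tau>)) \<le> K * ((v \<tau>)\<^sup>2 * (1 - sqrt h * \<tau>))"
      using K[OF \<tau>] weight_pos[OF \<tau>] by (intro mult_right_mono) auto
    then show "((g \<tau>)\<^sup>2 + potential h b m \<tau> * (v \<tau>)\<^sup>2) * (1 - sqrt h * \<tau>)
        \<le> (g \<tau>)\<^sup>2 * (1 - sqrt h * \<tau>) + K * ((v \<tau>)\<^sup>2 * (1 - sqrt h * \<tau>))"
      by (simp add: algebra_simps)
  qed (rule qform_integrand_integrable[OF H weight_pos])
  then show ?thesis
    using g2 wnorm2_integrand_integrable[OF H]
    unfolding qform_eq_set_integral[OF \<delta>] wnorm2_eq_set_integral[OF \<delta>]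
    by (simp add: set_integral_add)
qed

lemma multiplier_boundary_identity:
  fixes G G' :: "real \<Rightarrow> real"
  assumes H: "H1_dir \<delta> v g" and \<delta>: "0 \<le> \<delta>"
    and G_deriv: "\<And>\<tau>. (G has_real_derivative G' \<tau>) (at \<tau>)"
    and G'_cont: "continuous_on {0..\<delta>} G'" and G0: "G 0 = 1"
  shows "set_integrable lborel {0..\<delta>} (\<lambda>x. G' x * (v x)\<^sup>2 + G x * (2 * v x * g x))"
    and "(LBINT x:{0..\<delta>}. G' x * (v x)\<^sup>2 + G x * (2 * v x * g x)) = - (v 0)\<^sup>2"
proof -
  note vv' = H1_dir_square_primitive[OF H \<delta>]
  have G'_int: "set_integrable lborel {0..\<delta>} G'" by (rule borel_integrable_atLeastAtMost'[OF G'_cont])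
  have G: "G x = G 0 + (LBINT t:{0..x}. G' t)" if "x \<in> {0..\<delta>}" for x
    using that set_integral_FTC_real[OF _ G_deriv continuous_on_subset[OF G'_cont, of "{0..x}"]] by auto
  have "v \<delta> = 0" using H unfolding H1_dir_def by blast
  then show "set_integrable lborel {0..\<delta>} (\<lambda>x. G' x * (v x)\<^sup>2 + G x * (2 * v x * g x))"
    and "(LBINT x:{0..\<delta>}. G' x * (v x)\<^sup>2 + G x * (2 * v x * g x)) = - (v 0)\<^sup>2"
    using set_integral_by_parts_primitives[OF \<delta> G'_int vv'(1), of G "\<lambda>x. (v x)\<^sup>2", OF G vv'(2)] G0
    by simp_all
qed

lemma completing_the_square:
  fixes a g v G G' V \<mu> :: real
  assumes "a > 0" and "\<mu> * a \<le> G' - G\<^sup>2 / a + V * a"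
  shows "\<mu> * (v\<^sup>2 * a) - (G' * v\<^sup>2 + G * (2 * v * g)) \<le> (g\<^sup>2 + V * v\<^sup>2) * a"
proof -
  have "(g\<^sup>2 + V * v\<^sup>2) * a - (\<mu> * (v\<^sup>2 * a) - (G' * v\<^sup>2 + G * (2 * v * g)))
     = (a * g + G * v)\<^sup>2 / a + (G' - G\<^sup>2 / a + V * a - \<mu> * a) * v\<^sup>2"
    using assms(1) by (simp add: field_simps power2_eq_square)
  moreover have "(a * g + G * v)\<^sup>2 / a \<ge> 0" using assms(1) by simp
  moreover have "(G' - G\<^sup>2 / a + V * a - \<mu> * a) * v\<^sup>2 \<ge> 0" using assms(2) by simp
  ultimately show ?thesis by linarith
qed

lemma qform_lower_bound_by_multiplier:
  fixes G G' :: "real \<Rightarrow> real"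
  assumes H: "H1_dir \<delta> v g" and \<delta>: "0 \<le> \<delta>"
    and weight_pos: "\<And>\<tau>. \<tau> \<in> {0..\<delta>} \<Longrightarrow> 0 < 1 - sqrt h * \<tau>"
    and G_deriv: "\<And>\<tau>. (G has_real_derivative G' \<tau>) (at \<tau>)"
    and G'_cont: "continuous_on {0..\<delta>} G'" and G0: "G 0 = 1"
    and riccati: "\<And>\<tau>. \<tau> \<in> {0..\<delta>} \<Longrightarrow> \<mu> * (1 - sqrt h * \<tau>)
        \<le> G' \<tau> - (G \<tau>)\<^sup>2 / (1 - sqrt h * \<tau>) + potential h b m \<tau> * (1 - sqrt h * \<tau>)"
  shows "\<mu> * wnorm2 h \<delta> v \<le> qform h b m \<delta> v g"
proof -
  define w where "w = (\<lambda>\<tau>. 1 - sqrt h * \<tau>)"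
  define Q where "Q = (\<lambda>\<tau>. ((g \<tau>)\<^sup>2 + potential h b m \<tau> * (v \<tau>)\<^sup>2) * w \<tau>)"
  define R where "R = (\<lambda>x. \<mu> * ((v x)\<^sup>2 * w x) - (G' x * (v x)\<^sup>2 + G x * (2 * v x * g x)))"
  note bdry = multiplier_boundary_identity[OF H \<delta> G_deriv G'_cont G0]
  have norm_int: "set_integrable lborel {0..\<delta>} (\<lambda>x. (v x)\<^sup>2 * w x)"
    unfolding w_def by (rule wnorm2_integrand_integrable[OF H])
  have R_int: "set_integrable lborel {0..\<delta>} R"
    unfolding R_def using norm_int bdry(1) by (intro set_integral_diff(1) set_integrable_mult_right)
  have "(LBINT x:{0..\<delta>}. R x) \<le> (LBINT x:{0..\<delta>}. Q x)"
  proof (rule set_integral_mono[OF R_int])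
    show "set_integrable lborel {0..\<delta>} Q"
      unfolding Q_def w_def by (rule qform_integrand_integrable[OF H weight_pos])
    fix x assume x: "x \<in> {0..\<delta>}"
    show "R x \<le> Q x"
      unfolding R_def Q_def
      by (rule completing_the_square) (use weight_pos[OF x] riccati[OF x] in \<open>simp_all add: w_def\<close>)
  qed
  moreover have "(LBINT x:{0..\<delta>}. R x) = \<mu> * (LBINT x:{0..\<delta>}. (v x)\<^sup>2 * w x) + (v 0)\<^sup>2"
    unfolding R_def using norm_int bdry by (simp add: set_integral_diff(2))
  ultimately have "\<mu> * (LBINT x:{0..\<delta>}. (v x)\<^sup>2 * w x) \<le> (LBINT x:{0..\<delta>}. Q x) - (v 0)\<^sup>2"
    by linarith
  moreover have "qform h b m \<delta> v g = (LBINT x:{0..\<delta>}. Q x) - (v 0)\<^sup>2"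
    using qform_eq_set_integral[OF \<delta>, of h b m v g] by (simp add: Q_def w_def)
  moreover have "wnorm2 h \<delta> v = (LBINT x:{0..\<delta>}. (v x)\<^sup>2 * w x)"
    using wnorm2_eq_set_integral[OF \<delta>, of h v] by (simp add: w_def)
  ultimately show ?thesis by (simp only:)
qed

lemma lambda1_bounds:
  assumes \<delta>: "\<delta> = h powr (\<rho> - 1/2)" and weight: "sqrt h * \<delta> \<le> 1"
    and lower: "\<And>v g. H1_dir \<delta> v g \<Longrightarrow> \<mu> * wnorm2 h \<delta> v \<le> qform h b m \<delta> v g"
    and test: "H1_dir \<delta> v g" "wnorm2 h \<delta> v > 0"
  shows "\<mu> \<le> lambda1 b \<rho> h m" and "lambda1 b \<rho> h m \<le> qform h b m \<delta> v g / wnorm2 h \<delta> v"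
proof -
  define S where "S = {qform h b m \<delta> v g / wnorm2 h \<delta> v | v g. H1_dir \<delta> v g \<and> wnorm2 h \<delta> v \<noteq> 0}"
  have lambda1: "lambda1 b \<rho> h m = Inf S" unfolding lambda1_def S_def \<delta> Let_def by simp
  have S_lower: "\<mu> \<le> x" if "x \<in> S" for x
  proof -
    obtain v g where x: "x = qform h b m \<delta> v g / wnorm2 h \<delta> v"
      and H: "H1_dir \<delta> v g" and nz: "wnorm2 h \<delta> v \<noteq> 0"
      using \<open>x \<in> S\<close> unfolding S_def by blast
    have "0 \<le> \<delta>" using \<delta> by simp
    then have "0 < wnorm2 h \<delta> v" using wnorm2_nonneg[OF _ weight, of v] nz by linarith
    then show ?thesis unfolding x using lower[OF H] by (simp add: le_divide_eq)
  qed
  have test_in: "qform h b m \<delta> v g / wnorm2 h \<delta> v \<in> S" unfolding S_def using test by force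
  show "\<mu> \<le> lambda1 b \<rho> h m" unfolding lambda1 using S_lower test_in by (intro cInf_greatest) auto
  have "bdd_below S" using S_lower by (rule bdd_belowI)
  then show "lambda1 b \<rho> h m \<le> qform h b m \<delta> v g / wnorm2 h \<delta> v"
    unfolding lambda1 by (rule cInf_lower[OF test_in])
qed

definition potential_deviation :: "real \<Rightarrow> int \<Rightarrow> real \<Rightarrow> real" where
  "potential_deviation b m s =
     (\<bar>real_of_int m\<bar> * s / (1 - s) + \<bar>b\<bar> * s / 2)
     * (2 * \<bar>real_of_int m - b / 2\<bar> + (\<bar>real_of_int m\<bar> * s / (1 - s) + \<bar>b\<bar> * s / 2))"

lemma potential_deviation_nonneg:
  assumes "0 \<le> s" "s < 1"
  shows "0 \<le> potential_deviation b m s"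
  using assms unfolding potential_deviation_def by (intro mult_nonneg_nonneg add_nonneg_nonneg) auto

lemma potential_near_constant:
  assumes h: "0 < h" and \<tau>: "0 \<le> sqrt h * \<tau>" "sqrt h * \<tau> \<le> s" and s: "s \<le> 1/2"
  shows "\<bar>potential h b m \<tau> - h * (real_of_int m - b / 2)\<^sup>2\<bar> \<le> h * potential_deviation b m s"
proof -
  define w where "w = 1 - sqrt h * \<tau>"
  define X where "X = real_of_int m / w - b * w / 2"
  define y where "y = real_of_int m - b / 2"
  define \<eta> where "\<eta> = \<bar>real_of_int m\<bar> * s / (1 - s) + \<bar>b\<bar> * s / 2"
  have w: "1 - s \<le> w" "w \<le> 1" "0 < w" using \<tau> s by (auto simp: w_def)
  have "\<bar>1 / w - 1\<bar> = (1 - w) / w" using w by (simp add: field_simps)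
  also have "\<dots> \<le> s / (1 - s)" using w s by (intro frac_le) auto
  finally have inv_w: "\<bar>1 / w - 1\<bar> \<le> s / (1 - s)" .
  have "X - y = real_of_int m * (1 / w - 1) + b * (1 - w) / 2"
    using w by (simp add: X_def y_def field_simps)
  then have "\<bar>X - y\<bar> \<le> \<bar>real_of_int m\<bar> * \<bar>1 / w - 1\<bar> + \<bar>b\<bar> * \<bar>1 - w\<bar> / 2"
    by (metis abs_triangle_ineq abs_mult abs_divide abs_numeral)
  also have "\<dots> \<le> \<bar>real_of_int m\<bar> * (s / (1 - s)) + \<bar>b\<bar> * s / 2"
    using inv_w w by (intro add_mono mult_left_mono divide_right_mono) auto
  finally have X_y: "\<bar>X - y\<bar> \<le> \<eta>" unfolding \<eta>_def by simp
  have "\<bar>X\<^sup>2 - y\<^sup>2\<bar> = \<bar>X - y\<bar> * \<bar>X + y\<bar>"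
    by (simp add: power2_eq_square abs_mult[symmetric] algebra_simps)
  also have "\<dots> \<le> \<eta> * (2 * \<bar>y\<bar> + \<eta>)"
    using X_y by (intro mult_mono) auto
  finally have "\<bar>X\<^sup>2 - y\<^sup>2\<bar> \<le> potential_deviation b m s"
    unfolding potential_deviation_def \<eta>_def y_def .
  moreover have "potential h b m \<tau> = h * X\<^sup>2"
    using w unfolding potential_def X_def w_def[symmetric] by (simp add: field_simps power2_eq_square)
  ultimately show ?thesis
    using h by (simp add: y_def right_diff_distrib[symmetric] abs_mult)
qed

(* With eps = sqrt h and w = 1 - eps tau, this G makes G' - G^2/w equal to
   -(1 + eps + eps^2/2) w up to terms of order eps^3 tau (1 + tau). *)
definition multiplier :: "real \<Rightarrow> real \<Rightarrow> real" where
  "multiplier \<epsilon> \<tau> = (1 - \<epsilon> * \<tau>) * (1 - \<epsilon>\<^sup>2 * \<tau> / 2)"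

lemma multiplier_has_real_derivative:
  "(multiplier \<epsilon> has_real_derivative - \<epsilon> * (1 - \<epsilon>\<^sup>2 * \<tau> / 2) - \<epsilon>\<^sup>2 / 2 * (1 - \<epsilon> * \<tau>)) (at \<tau>)"
  unfolding multiplier_def by (rule derivative_eq_intros refl | simp)+

lemma multiplier_riccati_bound:
  fixes \<epsilon> \<tau> \<delta> s V L :: real
  assumes \<epsilon>: "0 < \<epsilon>" and \<tau>: "0 \<le> \<tau>" "\<tau> \<le> \<delta>" and s: "\<epsilon> * \<delta> = s" "s < 1"
    and V: "\<epsilon>\<^sup>2 * L \<le> V"
  shows "(-1 - \<epsilon> - \<epsilon>\<^sup>2 / 2 + \<epsilon>\<^sup>2 * (L - s\<^sup>2 / 4 - s * \<delta> / (1 - s))) * (1 - \<epsilon> * \<tau>)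
    \<le> (- \<epsilon> * (1 - \<epsilon>\<^sup>2 * \<tau> / 2) - \<epsilon>\<^sup>2 / 2 * (1 - \<epsilon> * \<tau>))
       - (multiplier \<epsilon> \<tau>)\<^sup>2 / (1 - \<epsilon> * \<tau>) + V * (1 - \<epsilon> * \<tau>)"
proof -
  define w where "w = 1 - \<epsilon> * \<tau>"
  define E where "E = s\<^sup>2 / 4 + s * \<delta> / (1 - s)"
  define B where "B = (\<epsilon>^3 * \<tau> / 2 - \<epsilon>^3 * \<tau>\<^sup>2) / w - \<epsilon>^4 * \<tau>\<^sup>2 / 4 + V - \<epsilon>\<^sup>2 * L + \<epsilon>\<^sup>2 * E"
  have "\<epsilon> * \<tau> \<le> s" using \<epsilon> \<tau> s(1) mult_left_mono[OF \<tau>(2), of \<epsilon>] by simp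
  then have w: "0 < w" "1 - s \<le> w" using s by (auto simp: w_def)
  have identity: "(- \<epsilon> * (1 - \<epsilon>\<^sup>2 * \<tau> / 2) - \<epsilon>\<^sup>2 / 2 * w) - (multiplier \<epsilon> \<tau>)\<^sup>2 / w + V * w
     - (-1 - \<epsilon> - \<epsilon>\<^sup>2 / 2 + \<epsilon>\<^sup>2 * (L - s\<^sup>2 / 4 - s * \<delta> / (1 - s))) * w = w * B"
    using w(1) unfolding B_def E_def multiplier_def w_def
    by (simp add: field_simps power2_eq_square power3_eq_cube power4_eq_xxxx)
  have \<tau>\<delta>: "\<tau>\<^sup>2 \<le> \<delta>\<^sup>2" using \<tau> by (intro power_mono) auto
  have "\<epsilon>^3 * \<tau>\<^sup>2 / w \<le> \<epsilon>^3 * \<delta>\<^sup>2 / (1 - s)"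
    using \<epsilon> \<tau>\<delta> w s by (intro frac_le mult_left_mono) auto
  also have "\<dots> = \<epsilon>\<^sup>2 * (s * \<delta> / (1 - s))"
    unfolding s(1)[symmetric] by (simp add: power2_eq_square power3_eq_cube)
  finally have cubic: "\<epsilon>^3 * \<tau>\<^sup>2 / w \<le> \<epsilon>\<^sup>2 * (s * \<delta> / (1 - s))" .
  have "\<epsilon>^4 * \<tau>\<^sup>2 / 4 \<le> \<epsilon>^4 * \<delta>\<^sup>2 / 4" using \<tau>\<delta> by (intro divide_right_mono mult_left_mono) auto
  also have "\<dots> = \<epsilon>\<^sup>2 * (s\<^sup>2 / 4)"
    unfolding s(1)[symmetric] by (simp add: power2_eq_square power4_eq_xxxx)
  finally have quartic: "\<epsilon>^4 * \<tau>\<^sup>2 / 4 \<le> \<epsilon>\<^sup>2 * (s\<^sup>2 / 4)" .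
  have "0 \<le> \<epsilon>^3 * \<tau> / 2 / w" using \<epsilon> \<tau> w by simp
  then have "0 \<le> B"
    using cubic quartic V unfolding B_def E_def by (simp add: diff_divide_distrib distrib_left)
  then have "0 \<le> w * B" using w(1) by simp
  then show ?thesis using identity unfolding w_def by linarith
qed

lemma qform_lower_bound:
  assumes h: "0 < h" and H: "H1_dir \<delta> v g" and \<delta>: "0 \<le> \<delta>"
    and s: "sqrt h * \<delta> = s" "s \<le> 1/2"
  shows "(-1 - sqrt h - h / 2 + h * ((real_of_int m - b / 2)\<^sup>2 - potential_deviation b m s
          - s\<^sup>2 / 4 - s * \<delta> / (1 - s))) * wnorm2 h \<delta> v
    \<le> qform h b m \<delta> v g"
proof (rule qform_lower_bound_by_multiplier[OF H \<delta> _ multiplier_has_real_derivative])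
  have below_s: "sqrt h * \<tau> \<le> s" if "\<tau> \<in> {0..\<delta>}" for \<tau>
    using that s mult_left_mono[of \<tau> \<delta> "sqrt h"] h by auto
  then show "\<And>\<tau>. \<tau> \<in> {0..\<delta>} \<Longrightarrow> 0 < 1 - sqrt h * \<tau>" using s by fastforce
  show "continuous_on {0..\<delta>} (\<lambda>\<tau>. - sqrt h * (1 - (sqrt h)\<^sup>2 * \<tau> / 2) - (sqrt h)\<^sup>2 / 2 * (1 - sqrt h * \<tau>))"
    by (intro continuous_intros) auto
  show "multiplier (sqrt h) 0 = 1" by (simp add: multiplier_def)
  fix \<tau> assume \<tau>: "\<tau> \<in> {0..\<delta>}"
  have "h * ((real_of_int m - b / 2)\<^sup>2 - potential_deviation b m s) \<le> potential h b m \<tau>"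
    using potential_near_constant[OF h _ _ s(2), of \<tau> b m] below_s[OF \<tau>] \<tau> h
    by (simp add: abs_le_iff right_diff_distrib)
  then show "(-1 - sqrt h - h / 2 + h * ((real_of_int m - b / 2)\<^sup>2 - potential_deviation b m s
          - s\<^sup>2 / 4 - s * \<delta> / (1 - s))) * (1 - sqrt h * \<tau>)
      \<le> (- sqrt h * (1 - (sqrt h)\<^sup>2 * \<tau> / 2) - (sqrt h)\<^sup>2 / 2 * (1 - sqrt h * \<tau>))
        - (multiplier (sqrt h) \<tau>)\<^sup>2 / (1 - sqrt h * \<tau>) + potential h b m \<tau> * (1 - sqrt h * \<tau>)"
    using multiplier_riccati_bound[of "sqrt h" \<tau> \<delta> s "(real_of_int m - b / 2)\<^sup>2 - potential_deviation b m s"]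
      h \<tau> s by simp
qed

lemma exp_test_function_H1_dir:
  assumes "0 \<le> \<delta>"
  shows "H1_dir \<delta> (\<lambda>\<tau>. exp (-\<tau>) - exp (-\<delta>)) (\<lambda>\<tau>. - exp (-\<tau>))"
  unfolding H1_dir_def
proof (intro conjI ballI)
  show "set_integrable lborel {0..\<delta>} (\<lambda>\<tau>. - exp (-\<tau>))"
    by (intro borel_integrable_atLeastAtMost' continuous_intros)
  show "set_integrable lborel {0..\<delta>} (\<lambda>\<tau>. (- exp (-\<tau>))\<^sup>2)"
    by (intro borel_integrable_atLeastAtMost' continuous_intros)
  fix x assume x: "x \<in> {0..\<delta>}"
  have "(LBINT t=0..x. - exp (-t)) = (LBINT t:{0..x}. - exp (-t))"
    using interval_integral_Icc[of 0 x] x by (simp add: zero_ereal_def)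
  also have "\<dots> = exp (-x) - exp (-0)"
    by (rule set_integral_FTC_real) (use x in \<open>auto intro!: derivative_eq_intros continuous_intros\<close>)
  finally show "exp (-x) - exp (-\<delta>) = exp (-0) - exp (-\<delta>) + (LBINT t=0..x. - exp (-t))" by simp
qed simp

lemma exp_weighted_integral:
  fixes \<epsilon> \<delta> :: real
  assumes "0 \<le> \<delta>"
  shows "(LBINT \<tau>:{0..\<delta>}. (exp (-\<tau>))\<^sup>2 * (1 - \<epsilon> * \<tau>))
    = 1/2 - \<epsilon> / 4 - (exp (-\<delta>))\<^sup>2 / 2 + \<epsilon> * (exp (-\<delta>))\<^sup>2 * (2 * \<delta> + 1) / 4"
proof -
  define F where "F \<tau> = - (exp (-\<tau>))\<^sup>2 / 2 + \<epsilon> * (exp (-\<tau>))\<^sup>2 * (2 * \<tau> + 1) / 4" for \<tau>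
  have "(F has_real_derivative (exp (-\<tau>))\<^sup>2 * (1 - \<epsilon> * \<tau>)) (at \<tau>)" for \<tau>
    unfolding F_def by (rule derivative_eq_intros refl | simp)+ (simp add: algebra_simps power2_eq_square)
  then have "(LBINT \<tau>:{0..\<delta>}. (exp (-\<tau>))\<^sup>2 * (1 - \<epsilon> * \<tau>)) = F \<delta> - F 0"
    by (rule set_integral_FTC_real[OF assms]) (intro continuous_intros)
  then show ?thesis by (simp add: F_def algebra_simps)
qed

lemma shifted_square_weighted_bounds:
  fixes e c w :: real
  assumes "0 < c" "0 \<le> e" "0 \<le> w" "w \<le> 1"
  shows "e\<^sup>2 * w - 2 * c * e \<le> (e - c)\<^sup>2 * w" and "(e - c)\<^sup>2 * w \<le> e\<^sup>2 * w + c\<^sup>2"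
proof -
  have expand: "(e - c)\<^sup>2 * w = e\<^sup>2 * w - 2 * c * e * w + c\<^sup>2 * w"
    by (simp add: power2_eq_square algebra_simps)
  have "2 * c * e * w \<le> 2 * c * e" "0 \<le> 2 * c * e * w" "0 \<le> c\<^sup>2 * w" "c\<^sup>2 * w \<le> c\<^sup>2"
    using assms by (simp_all add: mult_left_le)
  then show "e\<^sup>2 * w - 2 * c * e \<le> (e - c)\<^sup>2 * w" and "(e - c)\<^sup>2 * w \<le> e\<^sup>2 * w + c\<^sup>2"
    unfolding expand by linarith+
qed

lemma exp_test_function_wnorm2_bounds:
  fixes h \<delta> :: real
  assumes \<delta>: "0 \<le> \<delta>" and h: "0 \<le> h" and weight: "sqrt h * \<delta> \<le> 1"
  defines "c \<equiv> exp (-\<delta>)"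
  defines "I \<equiv> 1/2 - sqrt h / 4 - c\<^sup>2 / 2 + sqrt h * c\<^sup>2 * (2 * \<delta> + 1) / 4"
  shows "I - 2 * c * (1 - c) \<le> wnorm2 h \<delta> (\<lambda>\<tau>. exp (-\<tau>) - c)"
    and "wnorm2 h \<delta> (\<lambda>\<tau>. exp (-\<tau>) - c) \<le> I + c\<^sup>2 * \<delta>"
proof -
  define w where "w = (\<lambda>\<tau>::real. 1 - sqrt h * \<tau>)"
  have w: "0 \<le> w \<tau>" "w \<tau> \<le> 1" if "\<tau> \<in> {0..\<delta>}" for \<tau>
    using that weight mult_left_mono[of \<tau> \<delta> "sqrt h"] h by (auto simp: w_def)
  have c: "0 < c" by (simp add: c_def)
  have main: "(LBINT \<tau>:{0..\<delta>}. (exp (-\<tau>))\<^sup>2 * w \<tau>) = I"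
    unfolding w_def I_def c_def by (rule exp_weighted_integral[OF \<delta>])
  have main_int: "set_integrable lborel {0..\<delta>} (\<lambda>\<tau>. (exp (-\<tau>))\<^sup>2 * w \<tau>)"
    unfolding w_def by (intro borel_integrable_atLeastAtMost' continuous_intros)
  have "(LBINT \<tau>:{0..\<delta>}. c\<^sup>2) = c\<^sup>2 * \<delta> - c\<^sup>2 * 0"
    by (rule set_integral_FTC_real[OF \<delta>]) (auto intro!: derivative_eq_intros)
  then have const: "(LBINT \<tau>:{0..\<delta>}. c\<^sup>2) = c\<^sup>2 * \<delta>" by simp
  have "(LBINT \<tau>:{0..\<delta>}. 2 * c * exp (-\<tau>)) = - 2 * c * exp (-\<delta>) - (- 2 * c * exp (-0))"
    by (rule set_integral_FTC_real[OF \<delta>]) (auto intro!: derivative_eq_intros continuous_intros)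
  then have exp: "(LBINT \<tau>:{0..\<delta>}. 2 * c * exp (-\<tau>)) = 2 * c * (1 - c)"
    by (simp add: c_def algebra_simps)
  have norm: "wnorm2 h \<delta> (\<lambda>\<tau>. exp (-\<tau>) - c) = (LBINT \<tau>:{0..\<delta>}. (exp (-\<tau>) - c)\<^sup>2 * w \<tau>)"
    unfolding wnorm2_eq_set_integral[OF \<delta>] w_def ..
  have "I - 2 * c * (1 - c) = (LBINT \<tau>:{0..\<delta>}. (exp (-\<tau>))\<^sup>2 * w \<tau> - 2 * c * exp (-\<tau>))"
    using main main_int exp
    by (subst set_integral_diff(2)) (auto intro!: borel_integrable_atLeastAtMost' continuous_intros)
  also have "\<dots> \<le> (LBINT \<tau>:{0..\<delta>}. (exp (-\<tau>) - c)\<^sup>2 * w \<tau>)"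
  proof (rule set_integral_mono)
    show "\<And>\<tau>. \<tau> \<in> {0..\<delta>} \<Longrightarrow> (exp (-\<tau>))\<^sup>2 * w \<tau> - 2 * c * exp (-\<tau>) \<le> (exp (-\<tau>) - c)\<^sup>2 * w \<tau>"
      using shifted_square_weighted_bounds(1)[OF c _ w] by simp
  qed (unfold w_def; intro borel_integrable_atLeastAtMost' continuous_intros)+
  finally show "I - 2 * c * (1 - c) \<le> wnorm2 h \<delta> (\<lambda>\<tau>. exp (-\<tau>) - c)" unfolding norm .
  have "(LBINT \<tau>:{0..\<delta>}. (exp (-\<tau>) - c)\<^sup>2 * w \<tau>) \<le> (LBINT \<tau>:{0..\<delta>}. (exp (-\<tau>))\<^sup>2 * w \<tau> + c\<^sup>2)"
  proof (rule set_integral_mono)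
    show "\<And>\<tau>. \<tau> \<in> {0..\<delta>} \<Longrightarrow> (exp (-\<tau>) - c)\<^sup>2 * w \<tau> \<le> (exp (-\<tau>))\<^sup>2 * w \<tau> + c\<^sup>2"
      using shifted_square_weighted_bounds(2)[OF c _ w] by simp
  qed (unfold w_def; intro borel_integrable_atLeastAtMost' continuous_intros)+
  also have "\<dots> = I + c\<^sup>2 * \<delta>"
    using main main_int const
    by (subst set_integral_add(2)) (auto intro!: borel_integrable_atLeastAtMost' continuous_intros)
  finally show "wnorm2 h \<delta> (\<lambda>\<tau>. exp (-\<tau>) - c) \<le> I + c\<^sup>2 * \<delta>" unfolding norm .
qed

lemma exp_neg_small:
  fixes \<delta> :: real
  assumes "200 \<le> \<delta>"
  shows "exp (-\<delta>) \<le> 1/20000" and "exp (-\<delta>) * \<delta> \<le> 1/100"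
proof -
  have "200 * \<delta> \<le> \<delta> * \<delta>" using assms by (intro mult_right_mono) auto
  then have "100 * \<delta> \<le> 1 + \<delta> + \<delta>\<^sup>2 / 2" using assms unfolding power2_eq_square by linarith
  also have "\<dots> \<le> exp \<delta>" using exp_lower_Taylor_quadratic[of \<delta>] assms by simp
  finally have "100 * \<delta> \<le> exp \<delta>" .
  then show "exp (-\<delta>) \<le> 1/20000" "exp (-\<delta>) * \<delta> \<le> 1/100"
    using assms by (simp_all add: exp_minus field_simps)
qed

(* I is the integral of exp(-2 tau) w, and (I - 1)/I = -(1 + eps/2)/(1 - eps/2) + O(c)
   = -1 - eps - eps^2/2 - eps^3/4 - ... + O(c); the constants 24 and 16 absorb the O(c) terms
   coming from the cut-off c = exp(-delta). *)
lemma exp_test_quotient_algebra: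
  fixes \<epsilon> c \<delta> :: real
  assumes \<epsilon>: "0 < \<epsilon>" "\<epsilon> \<le> 1/2" and c: "0 < c" "c \<le> 1/20000" and \<delta>: "0 \<le> \<delta>" "c * \<delta> \<le> 1/100"
  defines "I \<equiv> 1/2 - \<epsilon> / 4 - c\<^sup>2 / 2 + \<epsilon> * c\<^sup>2 * (2 * \<delta> + 1) / 4"
  shows "I - (1 - c)\<^sup>2 \<le> (-1 - \<epsilon> - \<epsilon>\<^sup>2 / 2 + 24 * c + 16 * c * \<delta>) * (I + c\<^sup>2 * \<delta>)"
proof -
  define r where "r = - c\<^sup>2 / 2 + \<epsilon> * c\<^sup>2 * (2 * \<delta> + 1) / 4"
  define t where "t = 1 + \<epsilon> + \<epsilon>\<^sup>2 / 2"
  define P where "P = 24 * c + 16 * c * \<delta>"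
  define D where "D = I + c\<^sup>2 * \<delta>"
  have c2: "c\<^sup>2 \<le> c / 20000" using c by (simp add: power2_eq_square mult_left_mono[of c "1/20000" c, simplified])
  have c2\<delta>: "c\<^sup>2 * \<delta> \<le> c / 100" "0 \<le> c\<^sup>2 * \<delta>"
    using c \<delta> mult_left_mono[OF \<delta>(2), of c] by (simp_all add: power2_eq_square mult.assoc)
  have "\<epsilon> * (c\<^sup>2 * (2 * \<delta> + 1)) \<le> (1/2) * (c\<^sup>2 * (2 * \<delta> + 1))"
    using \<epsilon> \<delta> by (intro mult_right_mono) auto
  moreover have "c\<^sup>2 * (2 * \<delta> + 1) \<le> c / 40"
    using c2 c2\<delta> c by (simp add: algebra_simps)
  ultimately have "\<epsilon> * (c\<^sup>2 * (2 * \<delta> + 1)) \<le> c / 80" by linarith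
  moreover have "r = - c\<^sup>2 / 2 + \<epsilon> * (c\<^sup>2 * (2 * \<delta> + 1)) / 4" by (simp add: r_def mult.assoc)
  moreover have "0 \<le> \<epsilon> * (c\<^sup>2 * (2 * \<delta> + 1))" using \<epsilon> \<delta> by simp
  ultimately have r: "r \<le> c / 320" "- c\<^sup>2 / 2 \<le> r" using zero_le_power2[of c] by linarith+
  have t: "0 \<le> t" "t \<le> 2" unfolding t_def using \<epsilon> power_mono[OF \<epsilon>(2), of 2] by (auto simp: power2_eq_square)
  have "I - (1 - c)\<^sup>2 + t * D = - (\<epsilon>^3) / 8 + r + 2 * c - c\<^sup>2 + t * (r + c\<^sup>2 * \<delta>)"
    unfolding I_def D_def t_def r_def by (simp add: algebra_simps power2_eq_square power3_eq_cube)
  moreover have "t * (r + c\<^sup>2 * \<delta>) \<le> t * (c / 50)" using r c2\<delta> t by (intro mult_left_mono) auto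
  moreover have "t * (c / 50) \<le> 2 * (c / 50)" using t c by (intro mult_right_mono) auto
  moreover have "0 \<le> \<epsilon>^3" using \<epsilon> by simp
  ultimately have A: "I - (1 - c)\<^sup>2 + t * D \<le> 3 * c" using r c zero_le_power2[of c] by linarith
  have "1/4 \<le> D" unfolding D_def I_def using r c2 c c2\<delta> \<epsilon> by (simp add: r_def)
  then have "(24 * c) * (1/4) \<le> P * D" unfolding P_def using c \<delta> by (intro mult_mono) auto
  moreover have "(- t + P) * D = P * D - t * D" by (simp add: algebra_simps)
  ultimately have "I - (1 - c)\<^sup>2 \<le> (- t + P) * D" using A c by linarith
  then show ?thesis unfolding t_def P_def D_def by (simp add: algebra_simps)
qed

lemma exp_test_function_wnorm2_pos:
  assumes \<delta>: "200 \<le> \<delta>" and h: "0 \<le> h" "h \<le> 1/4" and weight: "sqrt h * \<delta> \<le> 1"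
  shows "0 < wnorm2 h \<delta> (\<lambda>\<tau>. exp (-\<tau>) - exp (-\<delta>))"
proof -
  define c where "c = exp (-\<delta>)"
  have c: "0 < c" "c \<le> 1/20000" using exp_neg_small[OF \<delta>] by (auto simp: c_def)
  have \<delta>0: "0 \<le> \<delta>" using \<delta> by simp
  have "sqrt h \<le> 1/2" using h real_sqrt_le_mono[of h "1/4"] by (simp add: real_sqrt_divide)
  moreover have "c\<^sup>2 \<le> 1/4" using c power_mono[of c "1/2" 2] by (simp add: power2_eq_square)
  moreover have "0 \<le> sqrt h * c\<^sup>2 * (2 * \<delta> + 1)" using h \<delta>0 by simp
  moreover have "2 * c * (1 - c) \<le> 2 * c" using c by (simp add: algebra_simps)
  ultimately show ?thesis
    using exp_test_function_wnorm2_bounds(1)[OF \<delta>0 h(1) weight] c unfolding c_def[symmetric] by linarith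
qed

lemma exp_test_function_quotient:
  assumes h: "0 < h" "h \<le> 1/4" and \<delta>: "200 \<le> \<delta>" and weight: "sqrt h * \<delta> < 1"
    and K: "\<And>\<tau>. \<tau> \<in> {0..\<delta>} \<Longrightarrow> potential h b m \<tau> \<le> h * K"
  defines "v \<equiv> \<lambda>\<tau>. exp (-\<tau>) - exp (-\<delta>)"
  shows "0 < wnorm2 h \<delta> v"
    and "qform h b m \<delta> v (\<lambda>\<tau>. - exp (-\<tau>)) / wnorm2 h \<delta> v
      \<le> -1 - sqrt h - h / 2 + h * K + 24 * exp (-\<delta>) + 16 * exp (-\<delta>) * \<delta>"
proof -
  define \<epsilon> where "\<epsilon> = sqrt h"
  define c where "c = exp (-\<delta>)"
  define I where "I = 1/2 - \<epsilon> / 4 - c\<^sup>2 / 2 + \<epsilon> * c\<^sup>2 * (2 * \<delta> + 1) / 4"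
  define D where "D = wnorm2 h \<delta> v"
  have \<epsilon>: "0 < \<epsilon>" "\<epsilon>\<^sup>2 = h" "\<epsilon> \<le> 1/2"
    using h real_sqrt_le_mono[of h "1/4"] by (auto simp: \<epsilon>_def real_sqrt_divide)
  have c: "0 < c" "c \<le> 1/20000" "c * \<delta> \<le> 1/100" using exp_neg_small[OF \<delta>] by (auto simp: c_def)
  have \<delta>0: "0 \<le> \<delta>" using \<delta> by simp
  have weight_pos: "0 < 1 - sqrt h * \<tau>" if "\<tau> \<in> {0..\<delta>}" for \<tau>
  proof -
    have "sqrt h * \<tau> \<le> sqrt h * \<delta>" using that h(1) by (intro mult_left_mono) auto
    then show ?thesis using weight by linarith
  qed
  note D_upper = exp_test_function_wnorm2_bounds(2)[OF \<delta>0 less_imp_le[OF h(1)] less_imp_le[OF weight],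
      folded v_def, folded \<epsilon>_def, folded c_def, folded I_def, folded D_def]
  show D: "0 < wnorm2 h \<delta> v"
    unfolding v_def by (rule exp_test_function_wnorm2_pos[OF \<delta> less_imp_le[OF h(1)] h(2) less_imp_le[OF weight]])
  have "qform h b m \<delta> v (\<lambda>\<tau>. - exp (-\<tau>))
      \<le> (LBINT \<tau>:{0..\<delta>}. (- exp (-\<tau>))\<^sup>2 * (1 - sqrt h * \<tau>)) + h * K * D - (v 0)\<^sup>2"
    unfolding D_def
    by (rule qform_le_of_potential_le[OF _ \<delta>0 weight_pos K])
       (simp_all add: v_def exp_test_function_H1_dir[OF \<delta>0])
  also have "\<dots> = I + h * K * D - (1 - c)\<^sup>2"
    using exp_weighted_integral[OF \<delta>0, of \<epsilon>] by (simp add: I_def v_def c_def \<epsilon>_def)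
  finally have Q: "qform h b m \<delta> v (\<lambda>\<tau>. - exp (-\<tau>)) \<le> I + h * K * D - (1 - c)\<^sup>2" .
  define T where "T = -1 - \<epsilon> - \<epsilon>\<^sup>2 / 2 + 24 * c + 16 * c * \<delta>"
  have "I - (1 - c)\<^sup>2 \<le> T * (I + c\<^sup>2 * \<delta>)"
    unfolding T_def I_def using exp_test_quotient_algebra[OF \<epsilon>(1,3) c(1,2) \<delta>0 c(3)] .
  also have "\<dots> \<le> T * D"
  proof (rule mult_left_mono_neg[OF D_upper])
    show "T \<le> 0" unfolding T_def using c \<epsilon>(1,3) zero_le_power2[of \<epsilon>] by linarith
  qed
  finally have "qform h b m \<delta> v (\<lambda>\<tau>. - exp (-\<tau>)) \<le> (T + h * K) * D"
    using Q by (simp add: algebra_simps)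
  then show "qform h b m \<delta> v (\<lambda>\<tau>. - exp (-\<tau>)) / wnorm2 h \<delta> v
      \<le> -1 - sqrt h - h / 2 + h * K + 24 * exp (-\<delta>) + 16 * exp (-\<delta>) * \<delta>"
    using D \<epsilon>(2) unfolding D_def T_def by (simp add: divide_le_eq \<epsilon>_def c_def add_ac)
qed

lemma lambda1_error_bound:
  fixes b \<rho> h :: real and m :: int
  assumes h: "0 < h" "h \<le> 1/4"
    and \<delta>: "\<delta> = h powr (\<rho> - 1/2)" "200 \<le> \<delta>"
    and s: "s = h powr \<rho>" "s \<le> 1/2"
  shows "\<bar>lambda1 b \<rho> h m - (-1 - sqrt h + ((real_of_int m - b / 2)\<^sup>2 - 1/2) * h)\<bar>
    \<le> h * (potential_deviation b m s + s\<^sup>2 / 4 + s * \<delta> / (1 - s))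
       + 24 * exp (-\<delta>) + 16 * exp (-\<delta>) * \<delta>"
proof -
  define \<beta> where "\<beta> = (real_of_int m - b / 2)\<^sup>2"
  define \<kappa> where "\<kappa> = potential_deviation b m s"
  have \<delta>0: "0 \<le> \<delta>" using \<delta> by simp
  have s\<delta>: "sqrt h * \<delta> = s"
    using h unfolding \<delta> s by (simp add: powr_half_sqrt[symmetric] powr_add[symmetric])
  have "\<bar>potential h b m \<tau> - h * \<beta>\<bar> \<le> h * \<kappa>" if "\<tau> \<in> {0..\<delta>}" for \<tau>
    unfolding \<beta>_def \<kappa>_def
    using that h s\<delta> s(2) mult_left_mono[of \<tau> \<delta> "sqrt h"]
    by (intro potential_near_constant) auto
  then have K: "potential h b m \<tau> \<le> h * (\<beta> + \<kappa>)" if "\<tau> \<in> {0..\<delta>}" for \<tau>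
    using that by (force simp: abs_le_iff distrib_left)
  have weight: "sqrt h * \<delta> < 1" using s\<delta> s(2) by simp
  note test = exp_test_function_quotient[OF h \<delta>(2) weight K]
  note bounds = lambda1_bounds[where b = b and m = m, OF \<delta>(1) less_imp_le[OF weight] qform_lower_bound[OF h(1) _ \<delta>0 s\<delta> s(2)]
      exp_test_function_H1_dir[OF \<delta>0] test(1)]
  have lower: "-1 - sqrt h + (\<beta> - 1/2) * h - h * (\<kappa> + s\<^sup>2 / 4 + s * \<delta> / (1 - s)) \<le> lambda1 b \<rho> h m"
    using bounds(1) unfolding \<beta>_def \<kappa>_def by (simp add: algebra_simps)
  have upper: "lambda1 b \<rho> h m
      \<le> -1 - sqrt h + (\<beta> - 1/2) * h + h * \<kappa> + 24 * exp (-\<delta>) + 16 * exp (-\<delta>) * \<delta>"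
    using order.trans[OF bounds(2) test(2)] by (simp add: algebra_simps)
  have "0 \<le> \<kappa>" unfolding \<kappa>_def using s by (intro potential_deviation_nonneg) auto
  moreover have "0 \<le> h * (s\<^sup>2 / 4 + s * \<delta> / (1 - s))" "0 \<le> 16 * exp (-\<delta>) * \<delta>"
    using h s \<delta>0 by auto
  moreover have "h * (\<kappa> + s\<^sup>2 / 4 + s * \<delta> / (1 - s)) = h * \<kappa> + h * (s\<^sup>2 / 4 + s * \<delta> / (1 - s))"
    by (simp add: algebra_simps)
  moreover have "0 \<le> h * \<kappa>" "0 \<le> 24 * exp (-\<delta>)" using h \<open>0 \<le> \<kappa>\<close> by simp_all
  ultimately show ?thesis
    using lower upper unfolding \<beta>_def[symmetric] \<kappa>_def[symmetric] abs_le_iff by linarith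
qed

lemma powr_tendsto_0_at_right:
  fixes a :: real
  assumes "0 < a"
  shows "((\<lambda>h. h powr a) \<longlongrightarrow> 0) (at_right 0)"
  by (rule tendsto_zero_powrI[OF tendsto_ident_at tendsto_const _ assms])
     (auto simp: eventually_at_right_less intro: eventually_mono[OF eventually_at_right_less[of 0]])

lemma powr_neg_filterlim_at_top:
  fixes a :: real
  assumes "a < 0"
  shows "filterlim (\<lambda>h. h powr a) at_top (at_right 0)"
proof -
  have "filterlim (\<lambda>h. inverse (h powr (- a))) at_top (at_right 0)"
    by (rule filterlim_inverse_at_top[OF powr_tendsto_0_at_right])
       (use assms in \<open>auto intro: eventually_mono[OF eventually_at_right_less[of 0]]\<close>)
  then show ?thesis by (simp add: powr_minus)
qed

lemma exp_neg_mult_powr_tendsto_0: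
  fixes q :: real
  shows "((\<lambda>x. exp (-x) * x powr q) \<longlongrightarrow> 0) at_top"
proof -
  obtain k :: nat where k: "q \<le> real k" using real_arch_simple by blast
  have "eventually (\<lambda>x. norm (exp (-x) * x powr q) \<le> x ^ k / exp x) at_top"
    using eventually_ge_at_top[of 1]
  proof eventually_elim
    case (elim x)
    have "x powr q \<le> x ^ k" using elim k powr_mono[of q "real k" x] by (simp add: powr_realpow)
    then show ?case by (simp add: exp_minus field_simps)
  qed
  then show ?thesis by (rule Lim_null_comparison) (rule tendsto_power_div_exp_0)
qed

lemma potential_deviation_tendsto_0:
  assumes "(s \<longlongrightarrow> 0) F"
  shows "((\<lambda>x. potential_deviation b m (s x)) \<longlongrightarrow> 0) F"
proof -
  have "((\<lambda>x. potential_deviation b m (s x)) \<longlongrightarrow> potential_deviation b m 0) F"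
    unfolding potential_deviation_def by (intro tendsto_intros assms) auto
  then show ?thesis by (simp add: potential_deviation_def)
qed

lemma smallo_by_vanishing_factor:
  fixes f g e :: "'a \<Rightarrow> real"
  assumes bound: "eventually (\<lambda>x. \<bar>f x\<bar> \<le> \<bar>g x\<bar> * e x) F" and e: "(e \<longlongrightarrow> 0) F"
  shows "f \<in> o[F](g)"
proof (rule landau_o.smallI)
  fix c :: real assume "0 < c"
  with e have "eventually (\<lambda>x. e x < c) F" by (rule order_tendstoD)
  with bound show "eventually (\<lambda>x. norm (f x) \<le> c * norm (g x)) F"
  proof eventually_elim
    case (elim x)
    then have "\<bar>g x\<bar> * e x \<le> \<bar>g x\<bar> * c" by (intro mult_left_mono) auto
    then show ?case using elim by (simp add: mult.commute)
  qed
qed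

lemma exp_neg_powr_mult_powr_tendsto_0:
  fixes a c :: real
  assumes "a < 0"
  shows "((\<lambda>h. exp (- (h powr a)) * h powr c) \<longlongrightarrow> 0) (at_right 0)"
proof -
  have "((\<lambda>h. exp (- (h powr a)) * (h powr a) powr (c / a)) \<longlongrightarrow> 0) (at_right 0)"
    by (rule filterlim_compose[OF exp_neg_mult_powr_tendsto_0 powr_neg_filterlim_at_top[OF assms]])
  moreover have "eventually (\<lambda>h. exp (- (h powr a)) * (h powr a) powr (c / a)
      = exp (- (h powr a)) * h powr c) (at_right 0)"
    using eventually_at_right_less[of 0] by eventually_elim (use assms in \<open>simp add: powr_powr\<close>)
  ultimately show ?thesis by (rule Lim_transform_eventually)
qed

lemma lambda1_asymptotics_fixed_m:
  fixes b \<rho> :: real and m :: int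
  assumes \<rho>: "1/4 < \<rho>" "\<rho> < 1/2"
  shows "(\<lambda>h. lambda1 b \<rho> h m - (-1 - sqrt h + ((real_of_int m - b / 2)\<^sup>2 - 1/2) * h))
    \<in> o[at_right 0](\<lambda>h. h)"
proof (rule smallo_by_vanishing_factor)
  define \<delta> where "\<delta> h = h powr (\<rho> - 1/2)" for h :: real
  define s where "s h = h powr \<rho>" for h :: real
  define err where "err h = potential_deviation b m (s h) + (s h)\<^sup>2 / 4 + h powr (2 * \<rho> - 1/2) / (1 - s h)
      + 24 * (exp (- \<delta> h) * h powr -1) + 16 * (exp (- \<delta> h) * h powr (\<rho> - 3/2))" for h
  have s: "(s \<longlongrightarrow> 0) (at_right 0)" unfolding s_def using \<rho> by (intro powr_tendsto_0_at_right) simp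
  have \<delta>: "filterlim \<delta> at_top (at_right 0)" unfolding \<delta>_def using \<rho> by (intro powr_neg_filterlim_at_top) simp
  have "(err \<longlongrightarrow> 0 + 0\<^sup>2 / 4 + 0 / (1 - 0) + 24 * 0 + 16 * 0) (at_right 0)"
    unfolding err_def \<delta>_def using \<rho>
    by (intro tendsto_intros potential_deviation_tendsto_0 s powr_tendsto_0_at_right
        exp_neg_powr_mult_powr_tendsto_0) auto
  then show "(err \<longlongrightarrow> 0) (at_right 0)" by simp
  have "eventually (\<lambda>h::real. 0 < h \<and> h \<le> 1/4) (at_right 0)"
    unfolding eventually_at_right_field by (intro exI[of _ "1/4"]) auto
  moreover have "eventually (\<lambda>h. 200 \<le> \<delta> h) (at_right 0)"
    using \<delta> by (simp add: filterlim_at_top)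
  moreover have "eventually (\<lambda>h. s h \<le> 1/2) (at_right 0)"
    using order_tendstoD(2)[OF s, of "1/2"] by (auto elim: eventually_mono)
  ultimately show "eventually (\<lambda>h. \<bar>lambda1 b \<rho> h m - (-1 - sqrt h + ((real_of_int m - b / 2)\<^sup>2 - 1/2) * h)\<bar>
      \<le> \<bar>h\<bar> * err h) (at_right 0)"
  proof eventually_elim
    case (elim h)
    then have h: "0 < h" "h \<le> 1/4" and \<delta>h: "200 \<le> \<delta> h" and sh: "s h \<le> 1/2" by auto
    \<comment> \<open>the first identity is where \<open>\<rho> > 1/4\<close> enters\<close>
    have "s h * \<delta> h = h powr (2 * \<rho> - 1/2)" "h * h powr -1 = 1" "h * h powr (\<rho> - 3/2) = \<delta> h"
      using h unfolding s_def \<delta>_def by (simp_all add: powr_add[symmetric] powr_mult_base)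
    then have "h * (potential_deviation b m (s h) + (s h)\<^sup>2 / 4 + s h * \<delta> h / (1 - s h))
        + 24 * exp (- \<delta> h) + 16 * exp (- \<delta> h) * \<delta> h = \<bar>h\<bar> * err h"
      using h unfolding err_def by (simp add: algebra_simps)
    then show ?case
      using lambda1_error_bound[where b = b and m = m, OF h \<delta>_def \<delta>h s_def sh] by simp
  qed
qed

lemma Min_image_abs_diff_le_sum:
  fixes f g :: "'a \<Rightarrow> real"
  assumes "finite M" "M \<noteq> {}"
  shows "\<bar>Min (f ` M) - Min (g ` M)\<bar> \<le> (\<Sum>m\<in>M. \<bar>f m - g m\<bar>)"
proof -
  have "Min (f ` M) \<in> f ` M" "Min (g ` M) \<in> g ` M" using assms by (auto intro: Min_in)
  then obtain m1 m2 where m1: "m1 \<in> M" "Min (f ` M) = f m1" and m2: "m2 \<in> M" "Min (g ` M) = g m2"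
    by auto
  have "\<bar>f m1 - g m1\<bar> \<le> (\<Sum>m\<in>M. \<bar>f m - g m\<bar>)" "\<bar>f m2 - g m2\<bar> \<le> (\<Sum>m\<in>M. \<bar>f m - g m\<bar>)"
    using m1 m2 assms by (auto intro: member_le_sum)
  moreover have "Min (g ` M) \<le> g m1" "Min (f ` M) \<le> f m2"
    using assms m1(1) m2(1) by (auto intro!: Min_le)
  ultimately show ?thesis using m1 m2 by (simp add: abs_le_iff)
qed

lemma Min_image_diff_smallo:
  fixes f g :: "'b \<Rightarrow> 'a \<Rightarrow> real"
  assumes "finite M" "M \<noteq> {}" and "\<And>m. m \<in> M \<Longrightarrow> (\<lambda>x. f x m - g x m) \<in> o[F](l)"
  shows "(\<lambda>x. Min (f x ` M) - Min (g x ` M)) \<in> o[F](l)"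
proof (rule landau_o.big_small_trans)
  show "(\<lambda>x. \<Sum>m\<in>M. \<bar>f x m - g x m\<bar>) \<in> o[F](l)"
    using assms(3) by (intro big_sum_in_smallo) simp
  show "(\<lambda>x. Min (f x ` M) - Min (g x ` M)) \<in> O[F](\<lambda>x. \<Sum>m\<in>M. \<bar>f x m - g x m\<bar>)"
    using Min_image_abs_diff_le_sum[OF assms(1,2)] by (intro landau_o.big_mono always_eventually) auto
qed

lemma finite_int_abs_le: "finite {m::int. \<bar>real_of_int m\<bar> \<le> A}"
proof (rule finite_subset[of _ "{- \<lceil>A\<rceil>..\<lceil>A\<rceil>}"])
  show "{m::int. \<bar>real_of_int m\<bar> \<le> A} \<subseteq> {- \<lceil>A\<rceil>..\<lceil>A\<rceil>}"
    by (auto simp: abs_le_iff ceiling_le_iff le_ceiling_iff minus_le_iff)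
qed simp

theorem proposition2p7:
  fixes A b \<rho> :: real
  assumes "A > 0" and "b > 0" and "1/4 < \<rho>" and "\<rho> < 1/2"
  shows "(\<lambda>h. Inf ((\<lambda>m. lambda1 b \<rho> h m) ` {m::int. \<bar>real_of_int m\<bar> \<le> A})
              - (-1 - sqrt h + (beta_hat b A - 1/2) * h))
         \<in> o[at_right 0](\<lambda>h. h)"
proof -
  define M where "M = {m::int. \<bar>real_of_int m\<bar> \<le> A}"
  define T where "T h x = -1 - sqrt h + (x - 1/2) * h" for h x :: real
  have M: "finite M" "M \<noteq> {}" using finite_int_abs_le \<open>A > 0\<close> by (auto simp: M_def intro!: exI[of _ 0])
  have "(\<lambda>h. Min ((\<lambda>m. lambda1 b \<rho> h m) ` M) - Min ((\<lambda>m. T h ((real_of_int m - b / 2)\<^sup>2)) ` M))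
      \<in> o[at_right 0](\<lambda>h. h)"
    using lambda1_asymptotics_fixed_m[OF assms(3,4)] by (intro Min_image_diff_smallo M) (simp add: T_def)
  moreover have "eventually (\<lambda>h. Min ((\<lambda>m. lambda1 b \<rho> h m) ` M) - Min ((\<lambda>m. T h ((real_of_int m - b / 2)\<^sup>2)) ` M)
      = Inf ((\<lambda>m. lambda1 b \<rho> h m) ` M) - T h (beta_hat b A)) (at_right 0)"
    using eventually_at_right_less[of 0]
  proof eventually_elim
    case (elim h)
    then have "mono (T h)" by (intro monoI) (simp add: T_def mult_right_mono)
    then show ?case
      using mono_Min_commute[of "T h" "(\<lambda>m. (real_of_int m - b / 2)\<^sup>2) ` M"] M
      by (simp add: beta_hat_def M_def[symmetric] cInf_eq_Min image_image)
  qed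
  ultimately show ?thesis unfolding M_def T_def by (rule landau_o.small.in_cong[THEN iffD1, rotated])
qed

end
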